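(* Let $0<\delta<1/10$. Any one-way (Alice to Bob) communication protocol for the $\mathsf{Overwrite}$ problem that errs with probability at most $\delta$ over inputs drawn from $\mathcal{D}_{\mathsf{Overwrite}}$ has communication complexity $\Omega(n)$ with respect to $\mathcal{D}_{\mathsf{Overwrite}}$.
   Context: In $\mathsf{Overwrite}$, Alice gets $X^A\in\{0,1,*\}^n$ and Bob gets $X^B\in\{0,1\}^n$ and an index $i^*\in[n]$, with the promise that for every $i\ne i^*$ either $X^A_i=X^B_i$ or $X^A_i=*$. Alice sends one message to Bob, who must output $X^A_{i^*}$; if $X^A_{i^*}=*$ both outputs $0$ and $1$ are correct. The distribution $\mathcal{D}_{\mathsf{Overwrite}}$: choose $i^*$ uniformly from $[n]$ and $X^B$ uniformly from $\{0,1\}^n$; set $X^A_{i^*}$ to $*$ with probability $1/2$, to $0$ with probability $1/4$ and to $1$ with probability $1/4$; independently for each $i\ne i^*$, set $X^A_i=*$ with probability $1/2$ and $X^A_i=X^B_i$ with probability $1/2$. Communication complexity with respect to a distribution is the expected message length (in bits) on inputs drawn from it. *)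

theory Defs
  imports "HOL-Probability.Probability"
begin

text \<open>Alice's symbols in {0,1,*}: None = *, Some False = 0, Some True = 1.
  Indices [n] are represented by {0..<n}; inputs are functions on nat that take a
  default value outside {0..<n}.\<close>

type_synonym alice_input = "nat \<Rightarrow> bool option"
type_synonym bob_input = "nat \<Rightarrow> bool"

definition star_coord_pmf :: "bool option pmf" where
  "star_coord_pmf = do { s \<leftarrow> bernoulli_pmf (1/2);
                          if s then return_pmf None else map_pmf Some (bernoulli_pmf (1/2)) }"

definition other_coord_pmf :: "bool \<Rightarrow> bool option pmf" where
  "other_coord_pmf b = map_pmf (\<lambda>s. if s then None else Some b) (bernoulli_pmf (1/2))"

definition D_overwrite :: "nat \<Rightarrow> (alice_input \<times> bob_input \<times> nat) pmf" where
  "D_overwrite n = do {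
     i \<leftarrow> pmf_of_set {..<n};
     xb \<leftarrow> Pi_pmf {..<n} False (\<lambda>_. bernoulli_pmf (1/2));
     xa \<leftarrow> Pi_pmf {..<n} None (\<lambda>j. if j = i then star_coord_pmf else other_coord_pmf (xb j));
     return_pmf (xa, xb, i) }"

definition ow_correct :: "alice_input \<Rightarrow> nat \<Rightarrow> bool \<Rightarrow> bool" where
  "ow_correct xa i out \<longleftrightarrow> (xa i = None \<or> xa i = Some out)"

text \<open>A one-way public-coin protocol: shared randomness r drawn from R (a discrete
  distribution on nat), Alice's message alice r xa (a bit string), Bob's output
  bob r msg xb i.  Deterministic protocols are the case R = return_pmf 0.\<close>
definition ow_error ::
  "nat \<Rightarrow> nat pmf \<Rightarrow> (nat \<Rightarrow> alice_input \<Rightarrow> bool list)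
     \<Rightarrow> (nat \<Rightarrow> bool list \<Rightarrow> bob_input \<Rightarrow> nat \<Rightarrow> bool) \<Rightarrow> real" where
  "ow_error n R alice bob =
     measure_pmf.prob (pair_pmf R (D_overwrite n))
       {(r, xa, xb, i). \<not> ow_correct xa i (bob r (alice r xa) xb i)}"

definition ow_cost ::
  "nat \<Rightarrow> nat pmf \<Rightarrow> (nat \<Rightarrow> alice_input \<Rightarrow> bool list) \<Rightarrow> ennreal" where
  "ow_cost n R alice =
     (\<integral>\<^sup>+ x. ennreal (real (length (alice (fst x) (fst (snd x)))))
        \<partial>measure_pmf (pair_pmf R (D_overwrite n)))"

end

theory Submission
  imports Defs
begin

text \<open>Sample D_Overwrite as a uniform index i, a uniform star pattern u, the bits v that Alice
  sees, and a fresh bit w i that replaces Bob's bit at i. Fix the public coins. For fixed v and w,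
  Bob's answers to a message m guess a star pattern: coordinate i is guessed to be a star iff the
  answer differs from v i. The guess disagrees with u at i exactly when Bob errs, or when u i is a
  star and the answer hits the hidden bit v i, which happens on a quarter of the inputs. So
  n (error + 1/4) is the expected Hamming distance between u and its guess. Messages of at most
  l bits produce fewer than 2^(l+1) guesses and a Hamming ball of radius t holds at most
  2^t (3/2)^n patterns, so unless many messages are long, most u are farther than t from their
  guess. With l = n/64 and t = 3n/8 this gives error \<ge> 97/800 - 24 cost / n, and an error
  below 1/10 forces cost \<ge> n/6400.\<close>

section \<open>Hamming balls and short messages\<close>

definition cube :: "nat \<Rightarrow> bool \<Rightarrow> (nat \<Rightarrow> bool) set" where
  "cube n d = PiE_dflt {..<n} d (\<lambda>_. UNIV)"

lemma finite_cube [simp, intro]: "finite (cube n d)"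
  by (auto simp: cube_def)

lemma card_cube [simp]: "card (cube n d) = 2 ^ n"
  by (simp add: cube_def card_PiE_dflt)

lemma mem_cube: "v \<in> cube n d \<longleftrightarrow> (\<forall>j\<ge>n. v j = d)"
  by (auto simp: cube_def PiE_dflt_def not_less)

lemma Pi_pmf_bernoulli_half: "Pi_pmf {..<n} d (\<lambda>_. bernoulli_pmf (1/2)) = pmf_of_set (cube n d)"
  unfolding bernoulli_pmf_half_conv_pmf_of_set cube_def by (subst Pi_pmf_of_set) auto

definition hamming :: "nat \<Rightarrow> (nat \<Rightarrow> bool) \<Rightarrow> (nat \<Rightarrow> bool) \<Rightarrow> nat" where
  "hamming n x y = card {i \<in> {..<n}. x i \<noteq> y i}"

lemma card_cube_coordinate_eq_half:
  assumes i: "i < n" and h: "\<And>v b. h (v(i := b)) = h v"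
  shows "2 * card {v \<in> cube n d. h v = v i} = 2 ^ n"
proof -
  define flip where "flip v = v(i := \<not> v i)" for v :: "nat \<Rightarrow> bool"
  let ?S = "{v \<in> cube n d. h v = v i}" and ?T = "{v \<in> cube n d. h v \<noteq> v i}"
  have flip_flip: "flip (flip v) = v" for v
    by (auto simp: flip_def)
  have "bij_betw flip ?S ?T"
    using i by (intro bij_betw_byWitness[where f' = flip]) (auto simp: flip_flip, auto simp: flip_def h mem_cube)
  then have "card ?T = card ?S"
    by (simp add: bij_betw_same_card)
  moreover have "card ?S + card ?T = card (cube n d)"
  proof -
    have "?S \<union> ?T = cube n d"
      by blast
    moreover have "card (?S \<union> ?T) = card ?S + card ?T"
      by (rule card_Un_disjoint) auto
    ultimately show ?thesis
      by simp
  qed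
  ultimately show ?thesis
    by simp
qed

lemma card_hamming_ball_le:
  "real (card {u \<in> cube n d. hamming n g u \<le> t}) \<le> 2 ^ t * (3/2) ^ n"
proof -
  let ?diff = "\<lambda>u. {i \<in> {..<n}. g i \<noteq> u i}"
  let ?B = "{u \<in> cube n d. hamming n g u \<le> t}"
  have "inj_on ?diff ?B"
  proof (rule inj_onI, rule ext)
    fix u v j
    assume "u \<in> ?B" "v \<in> ?B" "?diff u = ?diff v"
    then show "u j = v j"
      by (cases "j < n") (auto simp: mem_cube set_eq_iff)
  qed
  moreover have "?diff ` ?B \<subseteq> {X \<in> Pow {..<n}. card X \<le> t}"
    by (auto simp: hamming_def)
  ultimately have "card ?B \<le> card {X \<in> Pow {..<n}. card X \<le> t}"
    by (intro card_inj_on_le) auto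
  then have "real (card ?B) * (1/2) ^ t \<le> (\<Sum>X \<in> {X \<in> Pow {..<n}. card X \<le> t}. (1/2) ^ t)"
    by simp
  also have "\<dots> \<le> (\<Sum>X \<in> {X \<in> Pow {..<n}. card X \<le> t}. (1/2) ^ card X)"
    by (intro sum_mono power_decreasing) auto
  also have "\<dots> \<le> (\<Sum>X \<in> Pow {..<n}. (1/2) ^ card X)"
    by (intro sum_mono2) auto
  also have "\<dots> = (\<Prod>i<n. 1/2 + 1)"
    by (subst prod_add) auto
  finally show ?thesis
    by (simp add: field_simps power_divide)
qed

lemma card_bool_lists_length_le: "real (card {xs :: bool list. length xs \<le> l}) < 2 ^ Suc l"
proof -
  have "card {xs :: bool list. length xs \<le> l} = (\<Sum>k\<le>l. 2 ^ k)"
    using card_lists_length_le[of "UNIV :: bool set" l] by simp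
  also have "\<dots> < 2 ^ Suc l"
    by (induction l) auto
  finally show ?thesis
    by (metis of_nat_less_iff of_nat_numeral of_nat_power)
qed

lemma card_gt_le_sum_div:
  fixes g :: "'a \<Rightarrow> nat"
  assumes "finite A"
  shows "real (card {x \<in> A. g x > l}) \<le> (\<Sum>x \<in> A. real (g x)) / real (Suc l)"
proof -
  have "real (card {x \<in> A. g x > l}) = (\<Sum>x \<in> A. of_bool (g x > l))"
    using assms by (simp add: Int_def)
  also have "\<dots> \<le> (\<Sum>x \<in> A. real (g x) / real (Suc l))"
    by (intro sum_mono) (auto simp: field_simps)
  finally show ?thesis
    by (simp add: sum_divide_distrib)
qed

lemma card_short_message_decodes_close_le:
  fixes enc :: "(nat \<Rightarrow> bool) \<Rightarrow> bool list" and dec :: "bool list \<Rightarrow> nat \<Rightarrow> bool"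
  shows "real (card {u \<in> cube n d. length (enc u) \<le> l \<and> hamming n (dec (enc u)) u \<le> t})
           \<le> 2 ^ (Suc l + t) * (3/2) ^ n"
proof -
  let ?msgs = "{xs :: bool list. length xs \<le> l}"
  let ?ball = "\<lambda>m. {u \<in> cube n d. hamming n (dec m) u \<le> t}"
  have "{u \<in> cube n d. length (enc u) \<le> l \<and> hamming n (dec (enc u)) u \<le> t} \<subseteq> (\<Union>m \<in> ?msgs. ?ball m)"
    by auto
  then have "card {u \<in> cube n d. length (enc u) \<le> l \<and> hamming n (dec (enc u)) u \<le> t}
               \<le> card (\<Union>m \<in> ?msgs. ?ball m)"
    by (intro card_mono) (auto intro: finite_subset[of _ "cube n d"])
  also have "\<dots> \<le> (\<Sum>m \<in> ?msgs. card (?ball m))"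
    using finite_lists_length_le[of "UNIV :: bool set" l] by (intro card_UN_le) simp
  finally have "real (card {u \<in> cube n d. length (enc u) \<le> l \<and> hamming n (dec (enc u)) u \<le> t})
                  \<le> (\<Sum>m \<in> ?msgs. real (card (?ball m)))"
    by (simp flip: of_nat_sum)
  also have "\<dots> \<le> (\<Sum>m \<in> ?msgs. 2 ^ t * (3/2) ^ n)"
    by (intro sum_mono card_hamming_ball_le)
  also have "\<dots> = real (card ?msgs) * (2 ^ t * (3/2) ^ n)"
    by simp
  also have "\<dots> \<le> 2 ^ Suc l * (2 ^ t * (3/2) ^ n)"
    using card_bool_lists_length_le[of l] by (intro mult_right_mono) auto
  finally show ?thesis
    by (simp add: power_add)
qed

lemma sum_hamming_decode_ge:
  fixes enc :: "(nat \<Rightarrow> bool) \<Rightarrow> bool list" and dec :: "bool list \<Rightarrow> nat \<Rightarrow> bool"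
  shows "real (Suc t) * (2 ^ n - (\<Sum>u \<in> cube n d. real (length (enc u))) / real (Suc l)
                          - 2 ^ (Suc l + t) * (3/2) ^ n)
           \<le> (\<Sum>u \<in> cube n d. real (hamming n (dec (enc u)) u))"
proof -
  let ?far = "{u \<in> cube n d. hamming n (dec (enc u)) u > t}"
  let ?long = "{u \<in> cube n d. length (enc u) > l}"
  let ?close = "{u \<in> cube n d. length (enc u) \<le> l \<and> hamming n (dec (enc u)) u \<le> t}"
  have "cube n d \<subseteq> ?far \<union> ?long \<union> ?close"
    by auto
  then have "card (cube n d) \<le> card (?far \<union> ?long \<union> ?close)"
    by (intro card_mono) auto
  also have "\<dots> \<le> card (?far \<union> ?long) + card ?close"
    by (rule card_Un_le)
  also have "\<dots> \<le> card ?far + card ?long + card ?close"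
    using card_Un_le[of ?far ?long] by simp
  finally have "real (2 ^ n) \<le> real (card ?far + card ?long + card ?close)"
    by (simp only: card_cube of_nat_le_iff)
  then have "2 ^ n \<le> real (card ?far) + real (card ?long) + real (card ?close)"
    by simp
  then have "2 ^ n - (\<Sum>u \<in> cube n d. real (length (enc u))) / real (Suc l) - 2 ^ (Suc l + t) * (3/2) ^ n
               \<le> real (card ?far)"
    using card_gt_le_sum_div[OF finite_cube[of n d], where g = "\<lambda>u. length (enc u)" and l = l]
      card_short_message_decodes_close_le[of n d enc l dec t]
    by linarith
  then have "real (Suc t) * (2 ^ n - (\<Sum>u \<in> cube n d. real (length (enc u))) / real (Suc l)
                               - 2 ^ (Suc l + t) * (3/2) ^ n)
               \<le> real (Suc t) * real (card ?far)"
    by (rule mult_left_mono) simp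
  also have "\<dots> = (\<Sum>u \<in> ?far. real (Suc t))"
    by simp
  also have "\<dots> \<le> (\<Sum>u \<in> ?far. real (hamming n (dec (enc u)) u))"
    by (intro sum_mono) auto
  also have "\<dots> \<le> (\<Sum>u \<in> cube n d. real (hamming n (dec (enc u)) u))"
    by (intro sum_mono2) auto
  finally show ?thesis .
qed

section \<open>A uniform description of the distribution\<close>

lemma Pi_pmf_bind_Pair:
  assumes "finite A"
  shows "Pi_pmf A (d, e) (\<lambda>x. p x \<bind> (\<lambda>a. map_pmf (Pair a) (q x a)))
           = Pi_pmf A d p \<bind> (\<lambda>f. map_pmf (\<lambda>g x. (f x, g x)) (Pi_pmf A e (\<lambda>x. q x (f x))))"
proof -
  have "Pi_pmf A (d, e) (\<lambda>x. p x \<bind> (\<lambda>a. map_pmf (Pair a) (q x a)))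
          = Pi_pmf A d p \<bind> (\<lambda>f. Pi_pmf A e (\<lambda>x. q x (f x))
              \<bind> (\<lambda>g. return_pmf (\<lambda>x. if x \<in> A then (f x, g x) else (d, e))))"
    using assms by (simp add: map_pmf_def Pi_pmf_bind[where d' = d] Pi_pmf_bind[where d' = e])
  also have "\<dots> = Pi_pmf A d p \<bind> (\<lambda>f. map_pmf (\<lambda>g x. (f x, g x)) (Pi_pmf A e (\<lambda>x. q x (f x))))"
    unfolding map_pmf_def using assms
    by (intro bind_pmf_cong refl)
       (fastforce simp: fun_eq_iff dest: set_Pi_pmf_subset[OF assms, THEN subsetD])
  finally show ?thesis .
qed

lemma Pi_pmf_pair:
  assumes "finite A"
  shows "Pi_pmf A (d, e) (\<lambda>x. pair_pmf (p x) (q x))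
           = map_pmf (\<lambda>(f, g) x. (f x, g x)) (pair_pmf (Pi_pmf A d p) (Pi_pmf A e q))"
  using Pi_pmf_bind_Pair[OF assms, of d e p "\<lambda>x _. q x"]
  by (simp add: pair_pmf_def map_bind_pmf bind_map_pmf map_pmf_def[symmetric] bind_return_pmf map_pmf_comp)

lemma expectation_of_bool_eq: "measure_pmf.expectation M (\<lambda>x. of_bool (x = y)) = pmf M y"
proof -
  have "(\<lambda>x. of_bool (x = y)) = (\<lambda>x. indicator {y} x :: real)"
    by (auto simp: indicator_def)
  then show ?thesis
    by (simp add: measure_pmf_single)
qed

lemma overwrite_coordinate_eq:
  "bernoulli_pmf (1/2) \<bind> (\<lambda>b. map_pmf (Pair b) (if j = i then star_coord_pmf else other_coord_pmf b))
     = map_pmf (\<lambda>(u, v, w). (if j = i then w else v, if u then None else Some v))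
         (pair_pmf (bernoulli_pmf (1/2)) (pair_pmf (bernoulli_pmf (1/2)) (bernoulli_pmf (1/2))))"
  (is "?lhs = ?rhs")
proof (rule pmf_eqI)
  fix x :: "bool \<times> bool option"
  show "pmf ?lhs x = pmf ?rhs x"
    by (cases x; cases "fst x"; cases "snd x"; cases "j = i")
       (auto simp: star_coord_pmf_def other_coord_pmf_def pair_pmf_def map_pmf_def pmf_bind
          bind_assoc_pmf bind_return_pmf bind_return_pmf' indicator_def expectation_of_bool_eq)
qed

lemma Pi_pmf_map_dependent:
  assumes "finite A" and "\<And>x. f x d = d'"
  shows "Pi_pmf A d' (\<lambda>x. map_pmf (f x) (p x)) = map_pmf (\<lambda>h x. f x (h x)) (Pi_pmf A d p)"
proof -
  have "Pi_pmf A d' (\<lambda>x. map_pmf (f x) (p x))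
          = Pi_pmf A d p \<bind> (\<lambda>h. return_pmf (\<lambda>x. if x \<in> A then f x (h x) else d'))"
    using assms(1) by (simp add: map_pmf_def Pi_pmf_bind[where d' = d])
  also have "\<dots> = map_pmf (\<lambda>h x. f x (h x)) (Pi_pmf A d p)"
    unfolding map_pmf_def using assms
    by (intro bind_pmf_cong refl) (fastforce simp: fun_eq_iff dest: set_Pi_pmf_subset[OF assms(1), THEN subsetD])
  finally show ?thesis .
qed

definition star_mask :: "(nat \<Rightarrow> bool) \<Rightarrow> (nat \<Rightarrow> bool) \<Rightarrow> alice_input" where
  "star_mask u v = (\<lambda>j. if u j then None else Some (v j))"

text \<open>Replacing Bob's bit at i by the fresh bit w i makes X^B_i independent of X^A_i, as in
  D_Overwrite, while all other coordinates of X^B are the bits v seen by Alice.\<close>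

definition ow_instance ::
  "nat \<times> (nat \<Rightarrow> bool) \<times> (nat \<Rightarrow> bool) \<times> (nat \<Rightarrow> bool) \<Rightarrow> alice_input \<times> bob_input \<times> nat" where
  "ow_instance = (\<lambda>(i, u, v, w). (star_mask u v, v(i := w i), i))"

definition ow_space :: "nat \<Rightarrow> (nat \<times> (nat \<Rightarrow> bool) \<times> (nat \<Rightarrow> bool) \<times> (nat \<Rightarrow> bool)) set" where
  "ow_space n = {..<n} \<times> cube n True \<times> cube n False \<times> cube n False"

lemma D_overwrite_index_eq:
  "Pi_pmf {..<n} False (\<lambda>_. bernoulli_pmf (1/2)) \<bind> (\<lambda>xb.
       Pi_pmf {..<n} None (\<lambda>j. if j = i then star_coord_pmf else other_coord_pmf (xb j))
         \<bind> (\<lambda>xa. return_pmf (xa, xb, i)))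
     = map_pmf (\<lambda>(u, v, w). ow_instance (i, u, v, w))
         (pair_pmf (Pi_pmf {..<n} True (\<lambda>_. bernoulli_pmf (1/2)))
           (pair_pmf (Pi_pmf {..<n} False (\<lambda>_. bernoulli_pmf (1/2))) (Pi_pmf {..<n} False (\<lambda>_. bernoulli_pmf (1/2)))))"
  (is "?lhs = map_pmf _ (pair_pmf ?U (pair_pmf ?V ?W))")
proof -
  let ?b = "bernoulli_pmf (1/2)"
  define coord :: "nat \<Rightarrow> bool \<times> bool \<times> bool \<Rightarrow> bool \<times> bool option"
    where "coord j = (\<lambda>(u, v, w). (if j = i then w else v, if u then None else Some v))" for j
  have "?lhs = map_pmf (\<lambda>h. (snd \<circ> h, fst \<circ> h, i)) (Pi_pmf {..<n} (False, None)
                 (\<lambda>j. ?b \<bind> (\<lambda>b. map_pmf (Pair b) (if j = i then star_coord_pmf else other_coord_pmf b))))"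
    by (subst Pi_pmf_bind_Pair) (simp_all add: map_bind_pmf map_pmf_comp map_pmf_def[symmetric] o_def)
  also have "\<dots> = map_pmf (\<lambda>h. (snd \<circ> h, fst \<circ> h, i))
                     (Pi_pmf {..<n} (False, None) (\<lambda>j. map_pmf (coord j) (pair_pmf ?b (pair_pmf ?b ?b))))"
    by (simp only: overwrite_coordinate_eq coord_def)
  also have "\<dots> = map_pmf (\<lambda>Z. (snd \<circ> (\<lambda>j. coord j (Z j)), fst \<circ> (\<lambda>j. coord j (Z j)), i))
                     (Pi_pmf {..<n} (True, False, False) (\<lambda>_. pair_pmf ?b (pair_pmf ?b ?b)))"
    by (subst Pi_pmf_map_dependent[where d = "(True, False, False)"]) (auto simp: coord_def map_pmf_comp)
  also have "Pi_pmf {..<n} (True, False, False) (\<lambda>_. pair_pmf ?b (pair_pmf ?b ?b))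
               = map_pmf (\<lambda>(u, v, w) j. (u j, v j, w j)) (pair_pmf ?U (pair_pmf ?V ?W))"
    by (simp add: Pi_pmf_pair map_pmf_comp pair_map_pmf2 case_prod_unfold)
  finally show ?thesis
    by (auto simp: map_pmf_comp coord_def ow_instance_def star_mask_def fun_eq_iff intro!: map_pmf_cong)
qed

lemma pmf_of_set_Times:
  assumes "finite A" "A \<noteq> {}" "finite B" "B \<noteq> {}"
  shows "pmf_of_set (A \<times> B) = pair_pmf (pmf_of_set A) (pmf_of_set B)"
  by (rule pmf_eqI) (auto simp: assms pmf_pair card_cartesian_product indicator_def)

lemma cube_nonempty [simp]: "cube n d \<noteq> {}"
  by (simp add: cube_def)

lemma D_overwrite_eq_map_pmf_of_set:
  assumes "n > 0"
  shows "D_overwrite n = map_pmf ow_instance (pmf_of_set (ow_space n))"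
proof -
  have "D_overwrite n = pmf_of_set {..<n} \<bind> (\<lambda>i. map_pmf (\<lambda>(u, v, w). ow_instance (i, u, v, w))
          (pair_pmf (pmf_of_set (cube n True)) (pair_pmf (pmf_of_set (cube n False)) (pmf_of_set (cube n False)))))"
    unfolding D_overwrite_def D_overwrite_index_eq unfolding Pi_pmf_bernoulli_half ..
  also have "\<dots> = map_pmf ow_instance (pmf_of_set (ow_space n))"
    using assms by (simp add: ow_space_def lessThan_empty_iff pmf_of_set_Times pair_pmf_def map_bind_pmf
        map_pmf_def bind_assoc_pmf bind_return_pmf)
  finally show ?thesis .
qed

lemma finite_ow_space: "finite (ow_space n)"
  by (simp add: ow_space_def)

lemma card_ow_space: "card (ow_space n) = n * 2 ^ n * 2 ^ n * 2 ^ n"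
  by (simp add: ow_space_def card_cartesian_product)

lemma expectation_D_overwrite:
  assumes "n > 0"
  shows "measure_pmf.expectation (D_overwrite n) g
           = (\<Sum>i<n. \<Sum>u \<in> cube n True. \<Sum>v \<in> cube n False. \<Sum>w \<in> cube n False. g (ow_instance (i, u, v, w)))
               / (real n * 2 ^ n * 2 ^ n * 2 ^ n)"
proof -
  have "ow_space n \<noteq> {}"
    using assms by (simp add: ow_space_def lessThan_empty_iff)
  then show ?thesis
    using assms by (simp add: D_overwrite_eq_map_pmf_of_set integral_pmf_of_set finite_ow_space
        card_ow_space ow_space_def sum.cartesian_product)
qed

section \<open>Deterministic protocols\<close>

definition det_error ::
  "nat \<Rightarrow> (alice_input \<Rightarrow> bool list) \<Rightarrow> (bool list \<Rightarrow> bob_input \<Rightarrow> nat \<Rightarrow> bool) \<Rightarrow> real" where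
  "det_error n a b = measure_pmf.prob (D_overwrite n) {(xa, xb, i). \<not> ow_correct xa i (b (a xa) xb i)}"

definition det_cost :: "nat \<Rightarrow> (alice_input \<Rightarrow> bool list) \<Rightarrow> real" where
  "det_cost n a = measure_pmf.expectation (D_overwrite n) (\<lambda>x. real (length (a (fst x))))"

lemma det_error_eq_sum:
  assumes "n > 0"
  shows "det_error n a b
           = (\<Sum>i<n. \<Sum>u \<in> cube n True. \<Sum>v \<in> cube n False. \<Sum>w \<in> cube n False.
                of_bool (\<not> u i \<and> b (a (star_mask u v)) (v(i := w i)) i \<noteq> v i)) / (real n * 2 ^ n * 2 ^ n * 2 ^ n)"
proof -
  let ?E = "{(xa, xb, i). \<not> ow_correct xa i (b (a xa) xb i)}"
  have error_indicator: "indicator ?E (ow_instance (i, u, v, w))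
                           = of_bool (\<not> u i \<and> b (a (star_mask u v)) (v(i := w i)) i \<noteq> v i)" for i u v w
    by (auto simp: ow_instance_def star_mask_def ow_correct_def)
  have "det_error n a b = measure_pmf.expectation (D_overwrite n) (indicator ?E)"
    unfolding det_error_def by simp
  also have "\<dots> = (\<Sum>i<n. \<Sum>u \<in> cube n True. \<Sum>v \<in> cube n False. \<Sum>w \<in> cube n False.
                of_bool (\<not> u i \<and> b (a (star_mask u v)) (v(i := w i)) i \<noteq> v i)) / (real n * 2 ^ n * 2 ^ n * 2 ^ n)"
    unfolding expectation_D_overwrite[OF assms] error_indicator ..
  finally show ?thesis .
qed

lemma det_cost_eq_sum:
  assumes "n > 0"
  shows "det_cost n a
           = (\<Sum>u \<in> cube n True. \<Sum>v \<in> cube n False. real (length (a (star_mask u v)))) / (2 ^ n * 2 ^ n)"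
proof -
  have "(\<Sum>i<n. \<Sum>u \<in> cube n True. \<Sum>v \<in> cube n False. \<Sum>w \<in> cube n False. real (length (a (star_mask u v))))
          = n * 2 ^ n * (\<Sum>u \<in> cube n True. \<Sum>v \<in> cube n False. real (length (a (star_mask u v))))"
    by (simp add: sum_distrib_left mult.assoc)
  then show ?thesis
    using assms by (simp add: det_cost_def expectation_D_overwrite ow_instance_def)
qed

lemma real_hamming_eq_sum: "real (hamming n x y) = (\<Sum>i<n. of_bool (x i \<noteq> y i))"
  by (simp add: hamming_def Int_def)

lemma sum_cube_coordinate_eq_half:
  assumes "i < n" and "\<And>v c. h (v(i := c)) = h v"
  shows "(\<Sum>v \<in> cube n d. of_bool (h v = v i) :: real) = 2 ^ n / 2"
proof -
  have "real (2 * card {v \<in> cube n d. h v = v i}) = 2 ^ n"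
    by (simp only: card_cube_coordinate_eq_half[OF assms] of_nat_power of_nat_numeral)
  then show ?thesis
    by (simp add: Int_def)
qed

text \<open>Where u i is a star, neither input depends on v i, so Bob's answer at i equals v i for
  exactly half of the v.\<close>

lemma sum_starred_bit_guessed:
  assumes "i < n"
  shows "(\<Sum>u \<in> cube n True. \<Sum>v \<in> cube n False. \<Sum>w \<in> cube n False.
            of_bool (u i \<and> b (a (star_mask u v)) (v(i := w i)) i = v i) :: real) = 2 ^ n * 2 ^ n * 2 ^ n / 4"
proof -
  have "(\<Sum>v \<in> cube n False. \<Sum>w \<in> cube n False. of_bool (u i \<and> b (a (star_mask u v)) (v(i := w i)) i = v i))
          = of_bool (u i) * (2 ^ n * 2 ^ n / 2 :: real)" for u
  proof (cases "u i")
    case True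
    have "star_mask u (v(i := c)) = star_mask u v" for v c
      using True by (auto simp: star_mask_def)
    then have half: "(\<Sum>v \<in> cube n False. of_bool (b (a (star_mask u v)) (v(i := w i)) i = v i) :: real)
                       = 2 ^ n / 2" for w
      using assms by (intro sum_cube_coordinate_eq_half) simp_all
    have "(\<Sum>v \<in> cube n False. \<Sum>w \<in> cube n False. of_bool (u i \<and> b (a (star_mask u v)) (v(i := w i)) i = v i))
            = (\<Sum>w \<in> cube n False. \<Sum>v \<in> cube n False. of_bool (b (a (star_mask u v)) (v(i := w i)) i = v i) :: real)"
      using True by (subst sum.swap) simp
    also have "\<dots> = (\<Sum>w \<in> cube n False. 2 ^ n / 2)"
      by (simp only: half)
    finally show ?thesis
      using True by simp
  qed simp
  then have "(\<Sum>u \<in> cube n True. \<Sum>v \<in> cube n False. \<Sum>w \<in> cube n False.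
               of_bool (u i \<and> b (a (star_mask u v)) (v(i := w i)) i = v i))
             = (\<Sum>u \<in> cube n True. of_bool (u i)) * (2 ^ n * 2 ^ n / 2 :: real)"
    by (simp add: sum_distrib_right)
  also have "(\<Sum>u \<in> cube n True. of_bool (u i) :: real) = 2 ^ n / 2"
    using sum_cube_coordinate_eq_half[OF assms, of "\<lambda>_. True"] by simp
  also have "2 ^ n / 2 * (2 ^ n * 2 ^ n / 2) = (2 ^ n * 2 ^ n * 2 ^ n / 4 :: real)"
    by simp
  finally show ?thesis .
qed

lemma sum_innermost_to_outermost:
  "(\<Sum>x \<in> A. \<Sum>y \<in> B. \<Sum>z \<in> C. \<Sum>i \<in> I. g i x y z) = (\<Sum>i \<in> I. \<Sum>x \<in> A. \<Sum>y \<in> B. \<Sum>z \<in> C. g i x y z)"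
proof -
  have "(\<Sum>x \<in> A. \<Sum>y \<in> B. \<Sum>z \<in> C. \<Sum>i \<in> I. g i x y z) = (\<Sum>x \<in> A. \<Sum>y \<in> B. \<Sum>i \<in> I. \<Sum>z \<in> C. g i x y z)"
    by (rule sum.cong[OF refl], rule sum.cong[OF refl], rule sum.swap)
  also have "\<dots> = (\<Sum>x \<in> A. \<Sum>i \<in> I. \<Sum>y \<in> B. \<Sum>z \<in> C. g i x y z)"
    by (rule sum.cong[OF refl], rule sum.swap)
  also have "\<dots> = (\<Sum>i \<in> I. \<Sum>x \<in> A. \<Sum>y \<in> B. \<Sum>z \<in> C. g i x y z)"
    by (rule sum.swap)
  finally show ?thesis .
qed

definition star_guess ::
  "(bool list \<Rightarrow> bob_input \<Rightarrow> nat \<Rightarrow> bool) \<Rightarrow> (nat \<Rightarrow> bool) \<Rightarrow> (nat \<Rightarrow> bool) \<Rightarrow> bool list \<Rightarrow> nat \<Rightarrow> bool" where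
  "star_guess b v w m i \<longleftrightarrow> b m (v(i := w i)) i \<noteq> v i"

lemma real_hamming_star_guess:
  "real (hamming n (star_guess b v w (a (star_mask u v))) u)
     = (\<Sum>i<n. of_bool (u i \<and> b (a (star_mask u v)) (v(i := w i)) i = v i)
               + of_bool (\<not> u i \<and> b (a (star_mask u v)) (v(i := w i)) i \<noteq> v i))"
  unfolding real_hamming_eq_sum star_guess_def by (intro sum.cong) auto

lemma sum_hamming_star_guess_eq:
  assumes "n > 0"
  shows "(\<Sum>u \<in> cube n True. \<Sum>v \<in> cube n False. \<Sum>w \<in> cube n False.
            real (hamming n (star_guess b v w (a (star_mask u v))) u))
           = real n * 2 ^ n * 2 ^ n * 2 ^ n * (det_error n a b + 1/4)"
proof -
  let ?N = "2 ^ n :: real"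
  have "(\<Sum>u \<in> cube n True. \<Sum>v \<in> cube n False. \<Sum>w \<in> cube n False.
            real (hamming n (star_guess b v w (a (star_mask u v))) u))
          = (\<Sum>i<n. \<Sum>u \<in> cube n True. \<Sum>v \<in> cube n False. \<Sum>w \<in> cube n False.
                of_bool (u i \<and> b (a (star_mask u v)) (v(i := w i)) i = v i)
              + of_bool (\<not> u i \<and> b (a (star_mask u v)) (v(i := w i)) i \<noteq> v i))"
    unfolding real_hamming_star_guess by (rule sum_innermost_to_outermost)
  also have "\<dots> = (\<Sum>i<n. ?N * ?N * ?N / 4
                 + (\<Sum>u \<in> cube n True. \<Sum>v \<in> cube n False. \<Sum>w \<in> cube n False.
                      of_bool (\<not> u i \<and> b (a (star_mask u v)) (v(i := w i)) i \<noteq> v i)))"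
    by (intro sum.cong refl) (simp only: sum.distrib sum_starred_bit_guessed lessThan_iff)
  also have "\<dots> = real n * (?N * ?N * ?N / 4) + real n * ?N * ?N * ?N * det_error n a b"
    using assms by (simp only: sum.distrib sum_constant card_lessThan det_error_eq_sum) simp
  also have "\<dots> = real n * ?N * ?N * ?N * (det_error n a b + 1/4)"
    by (simp add: algebra_simps)
  finally show ?thesis .
qed

lemma sum_hamming_star_guess_ge:
  assumes "n > 0"
  shows "real n * 2 ^ n * 2 ^ n * 2 ^ n
           * (real (Suc t) / n * (1 - det_cost n a / Suc l - 2 ^ (Suc l + t) * (3/2) ^ n / 2 ^ n))
         \<le> (\<Sum>u \<in> cube n True. \<Sum>v \<in> cube n False. \<Sum>w \<in> cube n False.
                real (hamming n (star_guess b v w (a (star_mask u v))) u))"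
proof -
  let ?N = "2 ^ n :: real"
  let ?K = "2 ^ (Suc l + t) * (3/2) ^ n :: real"
  define len where "len v = (\<Sum>u \<in> cube n True. real (length (a (star_mask u v))))" for v
  have rearrange: "N * (N * r * (N - K)) - N * r / s * (N * N * c) = m * N * N * N * (r / m * (1 - c / s - K / N))"
    if "N > 0" "m > 0" "s > 0" for N m r s c K :: real
    using that by (simp add: field_simps)
  have len_sum: "(\<Sum>v \<in> cube n False. len v) = ?N * ?N * det_cost n a"
    using assms unfolding len_def by (subst sum.swap) (simp add: det_cost_eq_sum)
  have "real n * ?N * ?N * ?N * (real (Suc t) / n * (1 - det_cost n a / Suc l - ?K / ?N))
          = ?N * (?N * real (Suc t) * (?N - ?K)) - ?N * real (Suc t) / real (Suc l) * (?N * ?N * det_cost n a)"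
    using assms by (intro rearrange[symmetric]) auto
  also have "\<dots> = ?N * (?N * real (Suc t) * (?N - ?K)) - ?N * real (Suc t) / real (Suc l) * (\<Sum>v \<in> cube n False. len v)"
    by (simp only: len_sum)
  also have "\<dots> = (\<Sum>v \<in> cube n False. ?N * real (Suc t) * (?N - ?K) - ?N * real (Suc t) / real (Suc l) * len v)"
    by (simp add: sum_subtractf sum_distrib_left[symmetric] sum_divide_distrib[symmetric])
  also have "\<dots> = (\<Sum>v \<in> cube n False. \<Sum>w \<in> cube n False. real (Suc t) * (?N - len v / real (Suc l) - ?K))"
    by (intro sum.cong refl) (simp add: algebra_simps)
  also have "\<dots> \<le> (\<Sum>v \<in> cube n False. \<Sum>w \<in> cube n False. \<Sum>u \<in> cube n True.
                       real (hamming n (star_guess b v w (a (star_mask u v))) u))"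
    unfolding len_def by (intro sum_mono sum_hamming_decode_ge)
  also have "\<dots> = (\<Sum>u \<in> cube n True. \<Sum>v \<in> cube n False. \<Sum>w \<in> cube n False.
                       real (hamming n (star_guess b v w (a (star_mask u v))) u))"
    by (subst sum.swap, rule sum.cong[OF refl], rule sum.swap)
  finally show ?thesis .
qed

lemma det_error_lower_bound:
  assumes "n > 0"
  shows "real (Suc t) / n * (1 - det_cost n a / Suc l - 2 ^ (Suc l + t) * (3/2) ^ n / 2 ^ n)
           \<le> det_error n a b + 1/4"
proof (rule mult_left_le_imp_le)
  show "real n * 2 ^ n * 2 ^ n * 2 ^ n
          * (real (Suc t) / n * (1 - det_cost n a / Suc l - 2 ^ (Suc l + t) * (3/2) ^ n / 2 ^ n))
        \<le> real n * 2 ^ n * 2 ^ n * 2 ^ n * (det_error n a b + 1/4)"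
    using sum_hamming_star_guess_ge[OF assms, of t a l b] unfolding sum_hamming_star_guess_eq[OF assms] .
qed (use assms in simp)

lemma det_error_nonneg: "det_error n a b \<ge> 0"
  by (simp add: det_error_def)

lemma det_cost_nonneg: "det_cost n a \<ge> 0"
  unfolding det_cost_def by (intro integral_nonneg_AE) (auto simp: case_prod_beta)

text \<open>The bound of card_short_message_decodes_close_le, relative to 2^n, for messages of at most
  n div 64 bits and distance at most 3 n div 8.\<close>

definition overwrite_slack :: "nat \<Rightarrow> real" where
  "overwrite_slack n = 2 ^ (Suc (n div 64) + 3 * n div 8) * (3/2) ^ n / 2 ^ n"

lemma det_error_cost_tradeoff:
  assumes "n > 0" and "overwrite_slack n \<le> 1/100"
  shows "97/800 \<le> det_error n a b + 24 / n * det_cost n a"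
proof -
  let ?l = "n div 64" and ?t = "3 * n div 8"
  let ?B = "1 - det_cost n a / Suc ?l - 2 ^ (Suc ?l + ?t) * (3/2) ^ n / 2 ^ n"
  have max_bound: "c * B \<le> max 0 (r * B)" if "0 \<le> c" "c \<le> r" for c r B :: real
    using that by (cases "B \<ge> 0") (auto intro: mult_right_mono simp: mult_nonneg_nonpos)
  have "3/8 \<le> real (Suc ?t) / n"
    using assms(1) by (simp add: field_simps)
  then have "3/8 * ?B \<le> max 0 (real (Suc ?t) / n * ?B)"
    by (intro max_bound) auto
  also have "\<dots> \<le> det_error n a b + 1/4"
    using det_error_lower_bound[OF assms(1), of ?t a ?l b] det_error_nonneg[of n a b] by simp
  finally have main: "3/8 * ?B \<le> det_error n a b + 1/4" .
  have "real n / 64 \<le> real (Suc ?l)"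
    by linarith
  then have cost: "det_cost n a / Suc ?l \<le> det_cost n a / (n / 64)"
    using assms(1) det_cost_nonneg[of n a] by (intro divide_left_mono) auto
  have linear: "97/800 \<le> e + 3/8 * Y" if "3/8 * (1 - X - E) \<le> e + 1/4" "X \<le> Y" "E \<le> 1/100"
    for e X Y E :: real
    using that by (simp add: algebra_simps)
  have "24 / n * det_cost n a = 3/8 * (det_cost n a / (n / 64))"
    by simp
  then show ?thesis
    using linear[OF main cost assms(2)[unfolded overwrite_slack_def]] by simp
qed

lemma two_powr_25_64_times_three_quarters_lt_1: "2 powr (25/64) * (3/4) < (1 :: real)"
proof (rule ccontr)
  assume "\<not> ?thesis"
  then have "(4/3) ^ 64 \<le> (2 powr (25/64) :: real) ^ 64"
    by (intro power_mono) auto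
  also have "\<dots> = 2 ^ 25"
    by (simp flip: powr_realpow add: powr_powr)
  finally show False
    by (simp add: power_divide)
qed

lemma overwrite_slack_le: "overwrite_slack n \<le> 2 * (2 powr (25/64) * (3/4)) ^ n"
proof -
  have "real (n div 64 + 3 * n div 8) \<le> 25/64 * real n"
    by linarith
  then have "(2 :: real) ^ (n div 64 + 3 * n div 8) \<le> 2 powr (25/64 * real n)"
    by (simp flip: powr_realpow)
  also have "\<dots> = (2 powr (25/64)) ^ n"
    by (simp add: powr_powr flip: powr_realpow)
  finally have pow: "(2 :: real) ^ (n div 64 + 3 * n div 8) \<le> (2 powr (25/64)) ^ n" .
  have "overwrite_slack n = 2 * 2 ^ (n div 64 + 3 * n div 8) * ((3/2) ^ n / (2 ^ n :: real))"
    by (simp add: overwrite_slack_def)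
  also have "(3/2) ^ n / 2 ^ n = (3/4 :: real) ^ n"
    by (simp add: power_divide power_mult_distrib[symmetric])
  also have "2 * 2 ^ (n div 64 + 3 * n div 8) * (3/4) ^ n \<le> 2 * (2 powr (25/64)) ^ n * (3/4 :: real) ^ n"
    using pow by (intro mult_right_mono mult_left_mono) auto
  also have "\<dots> = 2 * (2 powr (25/64) * (3/4)) ^ n"
    by (simp only: power_mult_distrib mult.assoc)
  finally show ?thesis .
qed

lemma eventually_overwrite_slack: "eventually (\<lambda>n. overwrite_slack n \<le> 1/100) sequentially"
proof -
  let ?q = "2 powr (25/64) * (3/4) :: real"
  have "(\<lambda>n. 2 * ?q ^ n) \<longlonglongrightarrow> 0"
    using LIMSEQ_power_zero[of ?q] two_powr_25_64_times_three_quarters_lt_1 by (auto intro: tendsto_mult_right_zero)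
  then have "eventually (\<lambda>n. 2 * ?q ^ n < 1/100) sequentially"
    by (rule order_tendstoD) simp
  then show ?thesis
  proof eventually_elim
    case (elim n)
    then show ?case
      using overwrite_slack_le[of n] by linarith
  qed
qed

section \<open>Public-coin protocols\<close>

lemma ow_error_eq_nn_integral:
  "ennreal (ow_error n R alice bob) = (\<integral>\<^sup>+r. ennreal (det_error n (alice r) (bob r)) \<partial>R)"
proof -
  let ?E = "{(r, xa, xb, i). \<not> ow_correct xa i (bob r (alice r xa) xb i)}"
  have "ennreal (ow_error n R alice bob) = emeasure (pair_pmf R (D_overwrite n)) ?E"
    unfolding ow_error_def by (simp add: measure_pmf.emeasure_eq_measure)
  also have "\<dots> = (\<integral>\<^sup>+r. \<integral>\<^sup>+y. indicator ?E (r, y) \<partial>D_overwrite n \<partial>R)"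
    by (simp flip: nn_integral_indicator add: nn_integral_pair_pmf')
  also have "\<dots> = (\<integral>\<^sup>+r. ennreal (det_error n (alice r) (bob r)) \<partial>R)"
  proof (intro nn_integral_cong)
    fix r
    let ?E\<^sub>r = "{(xa, xb, i). \<not> ow_correct xa i (bob r (alice r xa) xb i)}"
    have "(\<integral>\<^sup>+y. indicator ?E (r, y) \<partial>D_overwrite n) = (\<integral>\<^sup>+y. indicator ?E\<^sub>r y \<partial>D_overwrite n)"
      by (intro nn_integral_cong) (auto simp: indicator_def)
    also have "\<dots> = ennreal (det_error n (alice r) (bob r))"
      by (simp add: det_error_def measure_pmf.emeasure_eq_measure)
    finally show "(\<integral>\<^sup>+y. indicator ?E (r, y) \<partial>D_overwrite n) = ennreal (det_error n (alice r) (bob r))" .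
  qed
  finally show ?thesis .
qed

lemma finite_set_pmf_D_overwrite: "n > 0 \<Longrightarrow> finite (set_pmf (D_overwrite n))"
  by (simp add: D_overwrite_eq_map_pmf_of_set finite_ow_space ow_space_def lessThan_empty_iff)

lemma ow_cost_eq_nn_integral:
  assumes "n > 0"
  shows "ow_cost n R alice = (\<integral>\<^sup>+r. ennreal (det_cost n (alice r)) \<partial>R)"
proof -
  have "(\<integral>\<^sup>+y. ennreal (real (length (alice r (fst y)))) \<partial>D_overwrite n) = ennreal (det_cost n (alice r))" for r
    unfolding det_cost_def using finite_set_pmf_D_overwrite[OF assms]
    by (subst nn_integral_eq_integral) (auto intro: integrable_measure_pmf_finite)
  then show ?thesis
    unfolding ow_cost_def by (simp add: nn_integral_pair_pmf')
qed

lemma ow_error_cost_tradeoff: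
  fixes R :: "nat pmf"
  assumes "n > 0" and "overwrite_slack n \<le> 1/100"
  shows "ennreal (97/800) \<le> ennreal (ow_error n R alice bob) + ennreal (24 / real n) * ow_cost n R alice"
proof -
  have "ennreal (97/800) \<le> ennreal (det_error n (alice r) (bob r)) + ennreal (24 / real n) * ennreal (det_cost n (alice r))"
    for r
    using det_error_cost_tradeoff[OF assms, of "alice r" "bob r"] det_error_nonneg det_cost_nonneg
    by (simp flip: ennreal_plus ennreal_mult' add: ennreal_leI)
  then have "(\<integral>\<^sup>+r. ennreal (97/800) \<partial>R)
               \<le> (\<integral>\<^sup>+r. ennreal (det_error n (alice r) (bob r)) + ennreal (24 / real n) * ennreal (det_cost n (alice r)) \<partial>R)"
    by (intro nn_integral_mono)
  then show ?thesis
    using assms(1) by (simp add: nn_integral_add nn_integral_cmult measure_pmf.emeasure_space_1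
        ow_error_eq_nn_integral ow_cost_eq_nn_integral)
qed

theorem mainTheorem17:
  fixes \<delta> :: real
  assumes "0 < \<delta>" and "\<delta> < 1/10"
  shows "\<exists>c>0. \<exists>N. \<forall>n\<ge>N. \<forall>(R :: nat pmf) alice bob.
           ow_error n R alice bob \<le> \<delta> \<longrightarrow> ow_cost n R alice \<ge> ennreal (c * real n)"
proof -
  obtain N where slack: "\<And>n. n \<ge> N \<Longrightarrow> overwrite_slack n \<le> 1/100"
    using eventually_overwrite_slack by (auto simp: eventually_sequentially)
  have cost_bound: "ow_cost n R alice \<ge> ennreal (1/6400 * real n)"
    if "n \<ge> Suc N" and error: "ow_error n R alice bob \<le> \<delta>" for n R alice bob
  proof (rule ccontr)
    assume "\<not> ?thesis"
    then have "ennreal (24 / real n) * ow_cost n R alice \<le> ennreal (24 / real n) * ennreal (1/6400 * real n)"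
      by (intro mult_left_mono) auto
    also have "\<dots> = ennreal (3/800)"
      using that(1) by (simp flip: ennreal_mult)
    finally have cost: "ennreal (24 / real n) * ow_cost n R alice \<le> ennreal (3/800)" .
    have "ennreal (97/800) \<le> ennreal (ow_error n R alice bob) + ennreal (24 / real n) * ow_cost n R alice"
      using that(1) slack[of n] by (intro ow_error_cost_tradeoff) auto
    also have "\<dots> \<le> ennreal (\<delta> + 3/800)"
      using error cost assms(1) by (simp add: ennreal_plus add_mono ennreal_leI)
    finally show False
      using assms by (subst (asm) ennreal_le_iff) auto
  qed
  show ?thesis
    by (intro exI[of _ "1/6400"] conjI exI[of _ "Suc N"] allI impI cost_bound) simp_all
qed

end
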